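(* Let $G$ be a non-complete double-critical $k$-chromatic graph. Then no two vertices of degree $k+1$ are adjacent in $G$.
   Context: All graphs are finite and simple. A graph $G$ is (vertex-)critical if $\chi(G-v)<\chi(G)$ for every vertex $v\in V(G)$. A critical graph $G$ is double-critical if $\chi(G-x-y)\le\chi(G)-2$ for every edge $xy\in E(G)$. *)

theory Defs
  imports Main
begin

definition graph :: "'a set \<Rightarrow> 'a set set \<Rightarrow> bool" where
  "graph V E \<longleftrightarrow> finite V \<and> (\<forall>e\<in>E. e \<subseteq> V \<and> card e = 2)"

definition adj :: "'a set set \<Rightarrow> 'a \<Rightarrow> 'a \<Rightarrow> bool" where
  "adj E x y \<longleftrightarrow> {x, y} \<in> E"

definition degree :: "'a set \<Rightarrow> 'a set set \<Rightarrow> 'a \<Rightarrow> nat" where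
  "degree V E v = card {u \<in> V. adj E v u}"

definition complete_graph :: "'a set \<Rightarrow> 'a set set \<Rightarrow> bool" where
  "complete_graph V E \<longleftrightarrow> (\<forall>x\<in>V. \<forall>y\<in>V. x \<noteq> y \<longrightarrow> adj E x y)"

definition proper_colouring :: "'a set \<Rightarrow> 'a set set \<Rightarrow> nat \<Rightarrow> ('a \<Rightarrow> nat) \<Rightarrow> bool" where
  "proper_colouring V E k f \<longleftrightarrow>
     (\<forall>v\<in>V. f v < k) \<and> (\<forall>x\<in>V. \<forall>y\<in>V. adj E x y \<longrightarrow> f x \<noteq> f y)"

definition colourable :: "'a set \<Rightarrow> 'a set set \<Rightarrow> nat \<Rightarrow> bool" where
  "colourable V E k \<longleftrightarrow> (\<exists>f. proper_colouring V E k f)"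

definition chromatic_number :: "'a set \<Rightarrow> 'a set set \<Rightarrow> nat" where
  "chromatic_number V E = (LEAST k. colourable V E k)"

definition del_verts_V :: "'a set \<Rightarrow> 'a set \<Rightarrow> 'a set" where
  "del_verts_V V S = V - S"

definition del_verts_E :: "'a set set \<Rightarrow> 'a set \<Rightarrow> 'a set set" where
  "del_verts_E E S = {e \<in> E. e \<inter> S = {}}"

definition vertex_critical :: "'a set \<Rightarrow> 'a set set \<Rightarrow> bool" where
  "vertex_critical V E \<longleftrightarrow>
     (\<forall>v\<in>V. chromatic_number (del_verts_V V {v}) (del_verts_E E {v}) < chromatic_number V E)"

definition double_critical :: "'a set \<Rightarrow> 'a set set \<Rightarrow> bool" where
  "double_critical V E \<longleftrightarrow> vertex_critical V E \<and>
     (\<forall>x\<in>V. \<forall>y\<in>V. adj E x y \<longrightarrow>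
        chromatic_number (del_verts_V V {x, y}) (del_verts_E E {x, y}) + 2 \<le> chromatic_number V E)"

end

theory Submission
  imports Defs
begin

text \<open>
  Let \<open>xy\<close> be an edge of \<open>G\<close> whose ends both have degree \<open>k + 1\<close>. By double-criticality every
  edge \<open>uv\<close> admits a \<open>(k - 2)\<close>-colouring of \<open>G - u - v\<close>, and since \<open>\<chi>(G) = k\<close> such a colouring
  can never be completed to a \<open>(k - 1)\<close>-colouring of \<open>G\<close> by moving an independent set to a new
  colour. Hence every colour class contains a common neighbour of \<open>u\<close> and \<open>v\<close>; so adjacent
  vertices have at least \<open>k - 2\<close> common neighbours, and inside the neighbourhood of a vertex of
  degree \<open>k + 1\<close> every vertex has 0 or 2 non-neighbours, there is no independent triple, and
  besides any edge there are two disjoint non-edges. For the edge \<open>xy\<close> either \<open>x\<close> has exactly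
  two neighbours outside \<open>N(y) \<union> {y}\<close>, and then each colour has exactly one common neighbour, or
  \<open>N(x) - y = N(y) - x\<close>, and then exactly two colours occur twice on it. In both cases the
  recolouring argument pins down the non-edges inside \<open>N(x)\<close> so tightly that two disjoint
  non-edges beside a suitable edge cannot exist.
\<close>

lemma adj_sym: "adj E u v \<longleftrightarrow> adj E v u"
  by (simp add: adj_def insert_commute)

lemma graph_not_adj_self: "graph V E \<Longrightarrow> \<not> adj E u u"
  by (auto simp: graph_def adj_def)

lemma graph_adj_in_vertices: "graph V E \<Longrightarrow> adj E u v \<Longrightarrow> u \<in> V \<and> v \<in> V"
  by (auto simp: graph_def adj_def)

lemma adj_del_verts_E: "adj (del_verts_E E S) u v \<longleftrightarrow> adj E u v \<and> u \<notin> S \<and> v \<notin> S"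
  by (auto simp: adj_def del_verts_E_def)

lemma graph_del_verts: "graph V E \<Longrightarrow> graph (del_verts_V V S) (del_verts_E E S)"
  by (auto simp: graph_def del_verts_V_def del_verts_E_def)

lemma colourable_card:
  assumes "graph V E"
  shows "colourable V E (card V)"
proof -
  obtain f :: "_ \<Rightarrow> nat" and n where f: "f ` V = {i. i < n}" "inj_on f V"
    using finite_imp_inj_to_nat_seg assms by (metis graph_def)
  have "n = card V" using card_image[OF f(2)] f(1) by simp
  have "proper_colouring V E (card V) f"
    unfolding proper_colouring_def
  proof (intro conjI ballI impI)
    show "v \<in> V \<Longrightarrow> f v < card V" for v using f \<open>n = card V\<close> by auto
    show "f u \<noteq> f v" if "u \<in> V" "v \<in> V" "adj E u v" for u v
      using that f(2) graph_not_adj_self[OF assms] inj_onD by metis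
  qed
  then show ?thesis unfolding colourable_def by blast
qed

lemma colourable_chromatic_number: "graph V E \<Longrightarrow> colourable V E (chromatic_number V E)"
  unfolding chromatic_number_def by (rule LeastI[of _ "card V"]) (rule colourable_card)

lemma chromatic_number_le: "colourable V E j \<Longrightarrow> chromatic_number V E \<le> j"
  unfolding chromatic_number_def by (rule Least_le)

lemma colourable_mono: "colourable V E j \<Longrightarrow> j \<le> j' \<Longrightarrow> colourable V E j'"
  unfolding colourable_def proper_colouring_def by (metis order_less_le_trans)

lemma proper_colouring_recolour_independent:
  assumes "proper_colouring V E m f" and "\<forall>u\<in>S. \<forall>v\<in>S. \<not> adj E u v"
  shows "proper_colouring V E (Suc m) (\<lambda>v. if v \<in> S then m else f v)"
  using assms unfolding proper_colouring_def by auto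

lemma proper_colouring_extend_pair:
  assumes "graph V E"
    and g: "proper_colouring (V - {x, y}) (del_verts_E E {x, y}) n g"
    and "cx < n" "cy < n" "cx \<noteq> cy"
    and "\<forall>t\<in>V - {x, y}. adj E x t \<longrightarrow> g t \<noteq> cx"
    and "\<forall>t\<in>V - {x, y}. adj E y t \<longrightarrow> g t \<noteq> cy"
  shows "proper_colouring V E n (g(x := cx, y := cy))"
  unfolding proper_colouring_def
proof (intro conjI ballI impI)
  fix v assume "v \<in> V"
  then show "(g(x := cx, y := cy)) v < n"
    using assms(3,4) g by (auto simp: proper_colouring_def)
next
  fix u v assume uv: "u \<in> V" "v \<in> V" "adj E u v"
  then have "u \<noteq> v" using graph_not_adj_self[OF assms(1)] by blast
  moreover have "u \<in> V - {x, y} \<Longrightarrow> v \<in> V - {x, y} \<Longrightarrow> g u \<noteq> g v"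
    using g uv(3) by (auto simp: proper_colouring_def adj_del_verts_E)
  moreover have "t \<in> V - {x, y} \<Longrightarrow> adj E x t \<Longrightarrow> g t \<noteq> cx"
    and "t \<in> V - {x, y} \<Longrightarrow> adj E y t \<Longrightarrow> g t \<noteq> cy" for t
    using assms(6,7) by blast+
  ultimately show "(g(x := cx, y := cy)) u \<noteq> (g(x := cx, y := cy)) v"
    using uv \<open>cx \<noteq> cy\<close> adj_sym[of E u v]
    by (cases "u = x"; cases "u = y"; cases "v = x"; cases "v = y") auto
qed

lemma card_eq_card_image_add_double_fibres:
  assumes "finite T" and "\<And>c. card {t \<in> T. h t = c} \<le> 2"
  shows "card T = card (h ` T) + card {c \<in> h ` T. card {t \<in> T. h t = c} = 2}"
proof -
  have one_or_two: "card {t \<in> T. h t = c} = 1 + (if card {t \<in> T. h t = c} = 2 then 1 else 0)"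
    if "c \<in> h ` T" for c
  proof -
    have "{t \<in> T. h t = c} \<noteq> {}" using that by auto
    then have "card {t \<in> T. h t = c} \<noteq> 0" using assms(1) by simp
    then show ?thesis using assms(2)[of c] by auto
  qed
  have "card T = (\<Sum>c \<in> h ` T. card {t \<in> T. h t = c})"
    using sum.image_gen[OF assms(1), of "\<lambda>_. 1 :: nat" h] by simp
  also have "\<dots> = (\<Sum>c \<in> h ` T. 1 + (if card {t \<in> T. h t = c} = 2 then 1 else 0))"
    using one_or_two by (rule sum.cong[OF refl])
  also have "\<dots> = (\<Sum>c \<in> h ` T. 1) + (\<Sum>c \<in> h ` T. if card {t \<in> T. h t = c} = 2 then 1 else 0)"
    by (rule sum.distrib)
  also have "\<dots> = card (h ` T) + card {c \<in> h ` T. card {t \<in> T. h t = c} = 2}"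
    using sum.inter_filter[of "h ` T" "\<lambda>_. 1 :: nat"] assms(1) by simp
  finally show ?thesis .
qed

lemma disjoint_pairs_through_pair:
  assumes "distinct [p, q, r, s]"
    and "{p, q} = {a, a'} \<or> {p, q} = {a, e} \<or> {p, q} = {a', e'}"
    and "{r, s} = {a, a'} \<or> {r, s} = {a, e} \<or> {r, s} = {a', e'}"
  shows "e \<noteq> e' \<and> {e, e'} \<subseteq> {p, q, r, s}"
  using assms by (auto simp: doubleton_eq_iff)

locale double_critical_graph =
  fixes V :: "'a set" and E :: "'a set set" and k :: nat
  assumes graph: "graph V E"
    and double_critical: "double_critical V E"
    and chromatic: "chromatic_number V E = k"
begin

definition nbhd :: "'a \<Rightarrow> 'a set" where
  "nbhd v = {u \<in> V. adj E v u}"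

definition private_nbrs :: "'a \<Rightarrow> 'a \<Rightarrow> 'a set" where
  "private_nbrs x z = {w \<in> nbhd x. w \<noteq> z \<and> \<not> adj E z w}"

definition residual_colouring :: "'a \<Rightarrow> 'a \<Rightarrow> ('a \<Rightarrow> nat) \<Rightarrow> bool" where
  "residual_colouring x y f \<longleftrightarrow> proper_colouring (V - {x, y}) (del_verts_E E {x, y}) (k - 2) f"

lemma not_adj_self: "\<not> adj E u u"
  using graph by (rule graph_not_adj_self)

lemma mem_nbhd_iff: "u \<in> nbhd v \<longleftrightarrow> adj E v u"
  using graph_adj_in_vertices[OF graph] by (auto simp: nbhd_def)

lemma finite_nbhd: "finite (nbhd v)"
  using graph by (simp add: nbhd_def graph_def)

lemma nbhd_subset: "nbhd v \<subseteq> V - {v}"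
  using not_adj_self by (auto simp: nbhd_def)

lemma mem_private_nbrs_iff: "w \<in> private_nbrs x z \<longleftrightarrow> adj E x w \<and> w \<noteq> z \<and> \<not> adj E z w"
  by (auto simp: private_nbrs_def mem_nbhd_iff)

lemma finite_private_nbrs: "finite (private_nbrs x z)"
  using finite_nbhd by (simp add: private_nbrs_def)

lemma residual_colouring_commute: "residual_colouring y x f = residual_colouring x y f"
  by (simp add: residual_colouring_def insert_commute)

lemma residual_colouring_less:
  "residual_colouring x y f \<Longrightarrow> v \<in> V - {x, y} \<Longrightarrow> f v < k - 2"
  by (simp add: residual_colouring_def proper_colouring_def)

lemma residual_colouring_adj:
  "residual_colouring x y f \<Longrightarrow> u \<in> V - {x, y} \<Longrightarrow> v \<in> V - {x, y} \<Longrightarrow> adj E u v \<Longrightarrow> f u \<noteq> f v"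
  by (simp add: residual_colouring_def proper_colouring_def adj_del_verts_E)

lemma edge_chromatic_bound:
  assumes "adj E x y"
  shows "chromatic_number (del_verts_V V {x, y}) (del_verts_E E {x, y}) + 2 \<le> k"
  using double_critical graph_adj_in_vertices[OF graph assms] assms chromatic
  unfolding double_critical_def by blast

lemma two_le_k: "adj E x y \<Longrightarrow> 2 \<le> k"
  using edge_chromatic_bound by fastforce

lemma residual_colouring_exists:
  assumes "adj E x y"
  obtains f where "residual_colouring x y f"
proof -
  have "colourable (del_verts_V V {x, y}) (del_verts_E E {x, y}) (k - 2)"
    by (rule colourable_mono[OF colourable_chromatic_number[OF graph_del_verts[OF graph]]])
      (use edge_chromatic_bound[OF assms] in linarith)
  then show thesis
    using that by (auto simp: colourable_def residual_colouring_def del_verts_V_def)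
qed

lemma residual_colouring_not_extendable:
  assumes "adj E x y" and f: "residual_colouring x y f"
    and "\<forall>u\<in>S. \<forall>v\<in>S. \<not> adj E u v"
    and "cx < k - 1" "cy < k - 1" "cx \<noteq> cy"
    and "\<forall>t\<in>V - {x, y}. adj E x t \<longrightarrow> (if t \<in> S then k - 2 else f t) \<noteq> cx"
    and "\<forall>t\<in>V - {x, y}. adj E y t \<longrightarrow> (if t \<in> S then k - 2 else f t) \<noteq> cy"
  shows False
proof -
  have "2 \<le> k" using assms(1) by (rule two_le_k)
  then have "Suc (k - 2) = k - 1" by linarith
  have "proper_colouring (V - {x, y}) (del_verts_E E {x, y}) (k - 1)
      (\<lambda>v. if v \<in> S then k - 2 else f v)"
    unfolding \<open>Suc (k - 2) = k - 1\<close>[symmetric] using f assms(3)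
    by (intro proper_colouring_recolour_independent) (auto simp: residual_colouring_def adj_del_verts_E)
  then have "proper_colouring V E (k - 1) ((\<lambda>v. if v \<in> S then k - 2 else f v)(x := cx, y := cy))"
    using assms(4-8) by (intro proper_colouring_extend_pair[OF graph])
  then have "k \<le> k - 1"
    using chromatic chromatic_number_le unfolding colourable_def by metis
  then show False using \<open>2 \<le> k\<close> by linarith
qed

lemma common_nbr_of_each_colour:
  assumes xy: "adj E x y" and f: "residual_colouring x y f" and i: "i < k - 2"
  shows "\<exists>c \<in> nbhd x \<inter> nbhd y. f c = i"
proof (rule ccontr)
  assume none: "\<not> ?thesis"
  let ?S = "{t \<in> V - {x, y}. adj E x t \<and> f t = i}"
  show False
  proof (rule residual_colouring_not_extendable[OF xy f, of ?S i "k - 2"])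
    show "\<forall>u\<in>?S. \<forall>v\<in>?S. \<not> adj E u v"
      using residual_colouring_adj[OF f] by blast
    show "\<forall>t\<in>V - {x, y}. adj E y t \<longrightarrow> (if t \<in> ?S then k - 2 else f t) \<noteq> k - 2"
    proof (intro ballI impI)
      fix t assume t: "t \<in> V - {x, y}" "adj E y t"
      then have "t \<notin> ?S" using none by (auto simp: mem_nbhd_iff)
      then show "(if t \<in> ?S then k - 2 else f t) \<noteq> k - 2"
        using residual_colouring_less[OF f t(1)] by simp
    qed
  qed (use i two_le_k[OF xy] in auto)
qed

lemma two_colour_nbrs_not_independent:
  assumes xy: "adj E x y" and f: "residual_colouring x y f"
    and "i < k - 2" "j < k - 2" "i \<noteq> j"
  defines "S \<equiv> {t \<in> V - {x, y}. f t = i \<and> adj E x t \<or> f t = j \<and> adj E y t}"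
  shows "\<exists>u\<in>S. \<exists>v\<in>S. adj E u v"
proof (rule ccontr)
  assume "\<not> ?thesis"
  then show False
    using assms(3-5) by (intro residual_colouring_not_extendable[OF xy f, of S i j]) (auto simp: S_def)
qed

lemma common_nbr_choice:
  assumes "adj E x y" and "residual_colouring x y f"
  obtains c where "\<forall>i < k - 2. c i \<in> nbhd x \<inter> nbhd y \<and> f (c i) = i"
  using common_nbr_of_each_colour[OF assms] by metis

lemma card_common_nbrs_ge:
  assumes xz: "adj E x z"
  shows "k - 2 \<le> card (nbhd x \<inter> nbhd z)"
proof -
  obtain f where f: "residual_colouring x z f" using residual_colouring_exists[OF xz] .
  obtain c where c: "\<forall>i < k - 2. c i \<in> nbhd x \<inter> nbhd z \<and> f (c i) = i"
    using common_nbr_choice[OF xz f] .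
  have "inj_on c {..<k - 2}" by (rule inj_onI) (metis c lessThan_iff)
  moreover have "c ` {..<k - 2} \<subseteq> nbhd x \<inter> nbhd z" using c by auto
  ultimately have "card {..<k - 2} \<le> card (nbhd x \<inter> nbhd z)"
    using card_inj_on_le finite_nbhd by (metis finite_Int)
  then show ?thesis by simp
qed

lemma common_nbr_not_adj:
  assumes xz: "adj E x z" and w: "w \<in> V - {x, z}" "\<not> (adj E x w \<and> adj E z w)"
  shows "\<exists>c \<in> nbhd x \<inter> nbhd z. c \<noteq> w \<and> \<not> adj E w c"
proof -
  obtain f where f: "residual_colouring x z f" using residual_colouring_exists[OF xz] .
  obtain c where c: "c \<in> nbhd x \<inter> nbhd z" "f c = f w"
    using common_nbr_of_each_colour[OF xz f residual_colouring_less[OF f w(1)]] by blast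
  have "c \<noteq> w" using c(1) w(2) by (auto simp: mem_nbhd_iff)
  moreover have "c \<in> V - {x, z}" using c(1) nbhd_subset by blast
  then have "\<not> adj E w c" using residual_colouring_adj[OF f w(1)] c(2) by metis
  ultimately show ?thesis using c(1) by blast
qed

lemma private_nbr_adj_private_nbr:
  assumes z: "z \<in> nbhd x" and w: "w \<in> private_nbrs x z"
  shows "\<exists>c \<in> private_nbrs x z. adj E w c"
proof -
  have w': "adj E x w" "w \<noteq> z" "\<not> adj E z w" using w by (simp_all add: mem_private_nbrs_iff)
  have "z \<in> V - {x, w}" using z w'(2) nbhd_subset by blast
  moreover have "\<not> (adj E x z \<and> adj E w z)" using w'(3) adj_sym[of E w z] by blast
  ultimately obtain c where "c \<in> nbhd x \<inter> nbhd w" "c \<noteq> z" "\<not> adj E z c"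
    using common_nbr_not_adj[OF w'(1)] by blast
  then show ?thesis by (auto simp: mem_private_nbrs_iff mem_nbhd_iff)
qed

lemma card_private_nbrs_add_common:
  assumes dx: "card (nbhd x) = Suc k" and z: "z \<in> nbhd x"
  shows "card (private_nbrs x z) + card (nbhd x \<inter> nbhd z) = k"
proof -
  have P: "private_nbrs x z = (nbhd x - {z}) - (nbhd x \<inter> nbhd z)"
    by (auto simp: private_nbrs_def mem_nbhd_iff)
  have sub: "nbhd x \<inter> nbhd z \<subseteq> nbhd x - {z}" using nbhd_subset by blast
  have fin: "finite (nbhd x - {z})" using finite_nbhd by simp
  have "card (nbhd x - {z}) = k" using dx z finite_nbhd by simp
  moreover have "card (nbhd x \<inter> nbhd z) \<le> card (nbhd x - {z})" by (rule card_mono[OF fin sub])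
  moreover have "card (private_nbrs x z) = card (nbhd x - {z}) - card (nbhd x \<inter> nbhd z)"
    unfolding P by (rule card_Diff_subset[OF finite_subset[OF sub fin] sub])
  ultimately show ?thesis by linarith
qed

lemma card_private_nbrs_le_2:
  assumes "card (nbhd x) = Suc k" and "z \<in> nbhd x"
  shows "card (private_nbrs x z) \<le> 2"
  using card_private_nbrs_add_common[OF assms] card_common_nbrs_ge[of x z] assms(2)
  by (simp add: mem_nbhd_iff)

lemma card_private_nbrs_ne_1:
  assumes z: "z \<in> nbhd x"
  shows "card (private_nbrs x z) \<noteq> 1"
proof
  assume "card (private_nbrs x z) = 1"
  then obtain w where w: "private_nbrs x z = {w}" by (rule card_1_singletonE)
  then obtain c where "c \<in> {w}" "adj E w c"
    using private_nbr_adj_private_nbr[OF z] by blast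
  then show False using not_adj_self by blast
qed

lemma private_nbrs_eq_pair:
  assumes "card (nbhd x) = Suc k" and "z \<in> nbhd x"
    and "p \<in> private_nbrs x z" "q \<in> private_nbrs x z" "p \<noteq> q"
  shows "private_nbrs x z = {p, q}"
  using card_private_nbrs_le_2[OF assms(1,2)] assms(3-5)
  by (intro card_seteq[symmetric, OF finite_private_nbrs]) auto

lemma private_nbrs_obtain_pair:
  assumes "card (nbhd x) = Suc k" and z: "z \<in> nbhd x" and a: "a \<in> private_nbrs x z"
  obtains b where "private_nbrs x z = {a, b}" "b \<noteq> a"
proof -
  have "card (private_nbrs x z) \<noteq> 0" using a finite_private_nbrs by auto
  then have "card (private_nbrs x z) = 2"
    using card_private_nbrs_le_2[OF assms(1,2)] card_private_nbrs_ne_1[OF z] by linarith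
  then have "card (private_nbrs x z - {a}) = 1" using a by simp
  then obtain b where "private_nbrs x z - {a} = {b}" by (rule card_1_singletonE)
  then have "b \<in> private_nbrs x z" "b \<noteq> a" by auto
  then show thesis using that private_nbrs_eq_pair[OF assms(1,2) a] by blast
qed

lemma card_independent_in_nbhd_le_2:
  assumes dx: "card (nbhd x) = Suc k" and I: "I \<subseteq> nbhd x" "\<forall>u\<in>I. \<forall>v\<in>I. \<not> adj E u v"
  shows "card I \<le> 2"
proof (rule ccontr)
  assume "\<not> card I \<le> 2"
  then have "3 \<le> card I" by linarith
  then obtain T where "T \<subseteq> I" "card T = 3" by (rule obtain_subset_with_card_n)
  then obtain z w q where zwq: "{z, w, q} \<subseteq> I" "z \<noteq> w" "w \<noteq> q" "z \<noteq> q"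
    unfolding card_3_iff by auto
  have inN: "z \<in> nbhd x" "w \<in> nbhd x" "q \<in> nbhd x" using zwq I(1) by auto
  have na: "\<not> adj E z w" "\<not> adj E z q" "\<not> adj E w q" using zwq(1) I(2) by simp_all
  have "w \<in> private_nbrs x z" "q \<in> private_nbrs x z"
    using zwq na inN by (simp_all add: private_nbrs_def)
  then have P: "private_nbrs x z = {w, q}"
    using private_nbrs_eq_pair[OF dx inN(1)] zwq(3) by blast
  then obtain c where "c = w \<or> c = q" "adj E w c"
    using private_nbr_adj_private_nbr[OF inN(1)] by blast
  then show False using not_adj_self na(3) by blast
qed

lemma private_nbrs_adj:
  assumes dx: "card (nbhd x) = Suc k" and z: "z \<in> nbhd x"
    and a: "a \<in> private_nbrs x z" "a' \<in> private_nbrs x z" "a \<noteq> a'"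
  shows "adj E a a'"
proof (rule ccontr)
  assume "\<not> adj E a a'"
  then have "\<forall>u\<in>{z, a, a'}. \<forall>v\<in>{z, a, a'}. \<not> adj E u v"
    using a not_adj_self adj_sym[of E a a'] adj_sym[of E z] by (auto simp: mem_private_nbrs_iff)
  moreover have "{z, a, a'} \<subseteq> nbhd x" using a z by (auto simp: private_nbrs_def)
  ultimately have "card {z, a, a'} \<le> 2"
    using card_independent_in_nbhd_le_2[OF dx] by blast
  then show False using a by (auto simp: mem_private_nbrs_iff)
qed

lemma private_nbrs_sym:
  "u \<in> nbhd x \<Longrightarrow> v \<in> nbhd x \<Longrightarrow> u \<in> private_nbrs x v \<longleftrightarrow> v \<in> private_nbrs x u"
  using adj_sym[of E u v] by (auto simp: mem_private_nbrs_iff mem_nbhd_iff)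

lemma card_colour_class_in_nbhd_le_2:
  assumes "card (nbhd z) = Suc k" and h: "residual_colouring a b h"
  shows "card {t \<in> nbhd z - {a, b}. h t = c} \<le> 2"
proof (rule card_independent_in_nbhd_le_2[OF assms(1)])
  show "\<forall>u \<in> {t \<in> nbhd z - {a, b}. h t = c}. \<forall>v \<in> {t \<in> nbhd z - {a, b}. h t = c}. \<not> adj E u v"
    using residual_colouring_adj[OF h] nbhd_subset by blast
qed auto

text \<open>The \<open>k - 1\<close> vertices of \<open>T\<close> use at most \<open>k - 3\<close> colours (not that of \<open>x\<close>), each at most twice.\<close>

lemma two_colour_classes_of_size_2_in_nbhd:
  assumes dx: "card (nbhd x) = Suc k" and ab: "a \<in> nbhd x" "b \<in> nbhd x" "adj E a b"
    and h: "residual_colouring a b h"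
  defines "T \<equiv> nbhd x - {a, b}"
  shows "2 \<le> card {c \<in> h ` T. card {t \<in> T. h t = c} = 2}"
proof -
  have "x \<in> V - {a, b}"
    using ab not_adj_self graph_adj_in_vertices[OF graph] by (auto simp: mem_nbhd_iff)
  then have hx: "h x < k - 2" by (rule residual_colouring_less[OF h])
  have "a \<noteq> b" using ab(3) not_adj_self by blast
  then have "card T = k - 1"
    using dx ab(1,2) finite_nbhd by (simp add: T_def card_Diff_subset)
  have "h ` T \<subseteq> {..<k - 2} - {h x}"
    using residual_colouring_less[OF h] residual_colouring_adj[OF h \<open>x \<in> V - {a, b}\<close>] nbhd_subset
    by (force simp: T_def mem_nbhd_iff)
  then have "card (h ` T) \<le> k - 3"
    using card_mono[of "{..<k - 2} - {h x}"] hx by fastforce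
  moreover have "card T = card (h ` T) + card {c \<in> h ` T. card {t \<in> T. h t = c} = 2}"
    unfolding T_def by (rule card_eq_card_image_add_double_fibres)
      (use finite_nbhd card_colour_class_in_nbhd_le_2[OF dx h] in auto)
  ultimately show ?thesis using \<open>card T = k - 1\<close> hx by linarith
qed

lemma two_disjoint_nonedges_in_nbhd:
  assumes dx: "card (nbhd x) = Suc k" and ab: "a \<in> nbhd x" "b \<in> nbhd x" "adj E a b"
  obtains p q r s where "{p, q, r, s} \<subseteq> nbhd x - {a, b}" "distinct [p, q, r, s]"
    "\<not> adj E p q" "\<not> adj E r s"
proof -
  obtain h where h: "residual_colouring a b h" using residual_colouring_exists[OF ab(3)] .
  define T where "T = nbhd x - {a, b}"
  define fibre where "fibre c = {t \<in> T. h t = c}" for c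
  have "2 \<le> card {c \<in> h ` T. card (fibre c) = 2}"
    using two_colour_classes_of_size_2_in_nbhd[OF dx ab h] by (simp add: T_def fibre_def)
  then obtain D where "D \<subseteq> {c \<in> h ` T. card (fibre c) = 2}" "card D = 2"
    by (rule obtain_subset_with_card_n)
  then obtain c1 c2 where "c1 \<noteq> c2" "card (fibre c1) = 2" "card (fibre c2) = 2"
    unfolding card_2_iff by auto
  then obtain p q r s where pq: "fibre c1 = {p, q}" "p \<noteq> q" and rs: "fibre c2 = {r, s}" "r \<noteq> s"
    unfolding card_2_iff by blast
  have pqrs: "{p, q, r, s} \<subseteq> T" and colours: "h p = c1" "h q = c1" "h r = c2" "h s = c2"
    using pq(1) rs(1) by (auto simp: fibre_def)
  then have "p \<in> V - {a, b}" "q \<in> V - {a, b}" "r \<in> V - {a, b}" "s \<in> V - {a, b}"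
    using nbhd_subset by (auto simp: T_def)
  then have "\<not> adj E p q" "\<not> adj E r s"
    using residual_colouring_adj[OF h] colours by metis+
  moreover have "p \<noteq> r" "p \<noteq> s" "q \<noteq> r" "q \<noteq> s" using colours \<open>c1 \<noteq> c2\<close> by auto
  ultimately show thesis
    using that[of p q r s] pqrs pq(2) rs(2) by (simp add: T_def)
qed

end

locale heavy_edge = double_critical_graph +
  fixes x y :: 'a and f :: "'a \<Rightarrow> nat" and c :: "nat \<Rightarrow> 'a"
  assumes edge: "adj E x y"
    and card_nbhd_x: "card (nbhd x) = Suc k" and card_nbhd_y: "card (nbhd y) = Suc k"
    and colouring: "residual_colouring x y f"
    and common_nbr_colour: "\<forall>i < k - 2. c i \<in> nbhd x \<inter> nbhd y \<and> f (c i) = i"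
begin

definition twin :: "'a \<Rightarrow> 'a" where
  "twin v = c (f v)"

lemma heavy_edge_commute: "heavy_edge V E k y x f c"
  using double_critical_graph_axioms edge card_nbhd_x card_nbhd_y colouring common_nbr_colour
  by (unfold_locales) (auto simp: adj_sym[of E y x] residual_colouring_commute)

lemma y_mem_nbhd_x: "y \<in> nbhd x"
  using edge by (simp add: mem_nbhd_iff)

lemma colour_less: "v \<in> V - {x, y} \<Longrightarrow> f v < k - 2"
  using colouring by (rule residual_colouring_less)

lemma colour_adj: "u \<in> V - {x, y} \<Longrightarrow> v \<in> V - {x, y} \<Longrightarrow> adj E u v \<Longrightarrow> f u \<noteq> f v"
  using colouring by (rule residual_colouring_adj)

lemma common_nbr_mem_V: "u \<in> nbhd x \<inter> nbhd y \<Longrightarrow> u \<in> V - {x, y}"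
  using nbhd_subset by blast

lemma private_nbr_mem_V: "a \<in> private_nbrs x y \<Longrightarrow> a \<in> V - {x, y}"
  using nbhd_subset by (auto simp: private_nbrs_def)

lemma twin_mem: "v \<in> V - {x, y} \<Longrightarrow> twin v \<in> nbhd x \<inter> nbhd y \<and> f (twin v) = f v"
  using common_nbr_colour colour_less by (simp add: twin_def)

lemma card_private_nbrs_commute: "card (private_nbrs y x) = card (private_nbrs x y)"
proof -
  have "x \<in> nbhd y" using edge adj_sym[of E y x] by (simp add: mem_nbhd_iff)
  then have "card (private_nbrs y x) + card (nbhd x \<inter> nbhd y) = k"
    using card_private_nbrs_add_common[OF card_nbhd_y] by (simp add: Int_commute)
  then show ?thesis
    using card_private_nbrs_add_common[OF card_nbhd_x y_mem_nbhd_x] by linarith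
qed

lemma card_private_nbrs_0_or_2: "card (private_nbrs x y) = 0 \<or> card (private_nbrs x y) = 2"
  using card_private_nbrs_le_2[OF card_nbhd_x y_mem_nbhd_x] card_private_nbrs_ne_1[OF y_mem_nbhd_x]
  by linarith

lemma private_nbrs_colour_inj:
  "a \<in> private_nbrs x y \<Longrightarrow> a' \<in> private_nbrs x y \<Longrightarrow> a \<noteq> a' \<Longrightarrow> f a \<noteq> f a'"
  using colour_adj private_nbr_mem_V private_nbrs_adj[OF card_nbhd_x y_mem_nbhd_x] by blast

lemma private_nbrs_of_private_nbr:
  assumes a: "a \<in> private_nbrs x y"
  shows "private_nbrs x a = {y, twin a}"
proof (rule private_nbrs_eq_pair[OF card_nbhd_x])
  have a': "adj E x a" "a \<noteq> y" "\<not> adj E y a" "a \<in> V - {x, y}"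
    using a private_nbr_mem_V by (auto simp: mem_private_nbrs_iff)
  note t = twin_mem[OF a'(4)]
  show "a \<in> nbhd x" "y \<in> private_nbrs x a"
    using a' edge adj_sym[of E a y] by (auto simp: mem_private_nbrs_iff mem_nbhd_iff)
  show "twin a \<in> private_nbrs x a"
    using t a' colour_adj[OF a'(4) common_nbr_mem_V[OF t[THEN conjunct1]]]
    by (auto simp: mem_private_nbrs_iff mem_nbhd_iff)
  show "y \<noteq> twin a" using t not_adj_self by (auto simp: mem_nbhd_iff)
qed

lemma common_private_nbr_colour:
  assumes a: "a \<in> private_nbrs x y" and u: "u \<in> nbhd x \<inter> nbhd y" "u \<in> private_nbrs x a"
  shows "f u = f a"
proof -
  have "u \<noteq> y" using u(1) not_adj_self by (auto simp: mem_nbhd_iff)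
  then have "u = twin a" using u(2) private_nbrs_of_private_nbr[OF a] by blast
  then show ?thesis using twin_mem[OF private_nbr_mem_V[OF a]] by simp
qed

lemma private_nbrs_of_twin:
  assumes a: "a \<in> private_nbrs x y"
  obtains w where "private_nbrs x (twin a) = {a, w}" "w \<noteq> a" "w \<in> nbhd x \<inter> nbhd y"
proof -
  note t = twin_mem[OF private_nbr_mem_V[OF a]]
  have "twin a \<in> private_nbrs x a" using private_nbrs_of_private_nbr[OF a] by blast
  then have "a \<in> private_nbrs x (twin a)"
    using a adj_sym[of E a "twin a"] by (auto simp: mem_private_nbrs_iff)
  then obtain w where w: "private_nbrs x (twin a) = {a, w}" "w \<noteq> a"
    using private_nbrs_obtain_pair[OF card_nbhd_x] t by blast
  then have w': "adj E x w" "w \<noteq> twin a" "\<not> adj E (twin a) w"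
    using mem_private_nbrs_iff[of w x "twin a"] by auto
  have "w \<noteq> y" using w'(3) t adj_sym[of E y "twin a"] by (auto simp: mem_nbhd_iff)
  have "w \<notin> private_nbrs x y"
  proof
    assume wp: "w \<in> private_nbrs x y"
    have "twin a \<in> private_nbrs x w"
      using w' t adj_sym[of E w "twin a"] by (auto simp: mem_private_nbrs_iff mem_nbhd_iff)
    then have "f (twin a) = f w" using common_private_nbr_colour[OF wp] t by blast
    then have "f a = f w" using t by simp
    then show False using private_nbrs_colour_inj[OF a wp] w(2) by simp
  qed
  then have "adj E y w" using w' \<open>w \<noteq> y\<close> by (auto simp: mem_private_nbrs_iff)
  then show thesis using that w w'(1) by (auto simp: mem_nbhd_iff)
qed

lemma private_nbr_of_twin_outside_nbhd:
  assumes a: "a \<in> private_nbrs x y" and v: "v \<in> private_nbrs y (twin a)" "\<not> adj E x v"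
  shows "f a \<in> f ` private_nbrs y x"
proof -
  interpret yx: heavy_edge V E k y x f c by (rule heavy_edge_commute)
  have t: "adj E x (twin a)" "adj E y (twin a)" "f (twin a) = f a"
    using twin_mem[OF private_nbr_mem_V[OF a]] by (auto simp: mem_nbhd_iff)
  have v': "adj E y v" "v \<noteq> twin a" "\<not> adj E (twin a) v" using v(1) by (simp_all add: mem_private_nbrs_iff)
  have "v \<noteq> x" using v'(3) t(1) adj_sym[of E x "twin a"] by blast
  then have vp: "v \<in> private_nbrs y x"
    using v'(1) v(2) adj_sym[of E x v] by (simp add: mem_private_nbrs_iff)
  have "twin a \<in> private_nbrs y v"
    using v' t(2) adj_sym[of E v "twin a"] by (simp add: mem_private_nbrs_iff)
  then have "f a = f v"
    using yx.common_private_nbr_colour[OF vp] t by (simp add: mem_nbhd_iff)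
  then show ?thesis using vp by blast
qed

lemma private_nbr_colour_mem:
  assumes a: "a \<in> private_nbrs x y"
  shows "f a \<in> f ` private_nbrs y x"
proof (rule ccontr)
  assume none: "f a \<notin> f ` private_nbrs y x"
  obtain w where w: "private_nbrs x (twin a) = {a, w}" "w \<noteq> a" "w \<in> nbhd x \<inter> nbhd y"
    using private_nbrs_of_twin[OF a] .
  have "twin a \<in> nbhd y" using twin_mem[OF private_nbr_mem_V[OF a]] by simp
  have "private_nbrs y (twin a) = {w}"
  proof
    have "w \<in> private_nbrs x (twin a)" using w(1) by blast
    then show "{w} \<subseteq> private_nbrs y (twin a)"
      using w(3) by (auto simp: mem_private_nbrs_iff mem_nbhd_iff)
  next
    show "private_nbrs y (twin a) \<subseteq> {w}"
    proof
      fix v assume v: "v \<in> private_nbrs y (twin a)"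
      then have "adj E x v"
        using private_nbr_of_twin_outside_nbhd[OF a] none by blast
      then have "v \<in> private_nbrs x (twin a)" using v by (simp add: mem_private_nbrs_iff)
      then have "v = a \<or> v = w" using w(1) by simp
      moreover have "\<not> adj E y a" "adj E y v"
        using a v by (simp_all add: mem_private_nbrs_iff)
      ultimately show "v \<in> {w}" by blast
    qed
  qed
  then show False using card_private_nbrs_ne_1[OF \<open>twin a \<in> nbhd y\<close>] by simp
qed

lemma private_nbrs_colours_eq: "f ` private_nbrs x y = f ` private_nbrs y x"
proof -
  interpret yx: heavy_edge V E k y x f c by (rule heavy_edge_commute)
  show ?thesis using private_nbr_colour_mem yx.private_nbr_colour_mem by blast
qed

lemma nonedge_in_nbhd_common:
  assumes t: "t \<in> nbhd x" "t \<notin> private_nbrs x y" and t': "t' \<in> nbhd x" "t' \<notin> private_nbrs x y"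
    and "t \<noteq> t'" "\<not> adj E t t'"
  shows "t \<in> nbhd x \<inter> nbhd y"
proof (cases "t = y")
  case True
  then have "t' \<in> private_nbrs x y" using t' assms(5,6) by (simp add: private_nbrs_def)
  then show ?thesis using t' by blast
next
  case False
  then show ?thesis using t by (simp add: private_nbrs_def mem_nbhd_iff)
qed

lemma private_nbr_of_common_nbr:
  assumes m: "m \<in> nbhd x \<inter> nbhd y" "\<forall>a \<in> private_nbrs x y. m \<noteq> twin a"
    and t: "t \<in> private_nbrs x m"
  shows "t \<in> nbhd x \<inter> nbhd y"
proof -
  have t': "t \<in> nbhd x" "t \<noteq> m" "\<not> adj E m t" using t by (auto simp: private_nbrs_def)
  have "t \<notin> private_nbrs x y"
  proof
    assume tp: "t \<in> private_nbrs x y"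
    have "m \<in> private_nbrs x t" using t private_nbrs_sym[of m x t] m(1) t'(1) by blast
    moreover have "m \<noteq> y" using m(1) not_adj_self by (auto simp: mem_nbhd_iff)
    ultimately show False using private_nbrs_of_private_nbr[OF tp] m(2) tp by blast
  qed
  moreover have "m \<notin> private_nbrs x y" using m(1) by (simp add: mem_private_nbrs_iff mem_nbhd_iff)
  ultimately show ?thesis
    using nonedge_in_nbhd_common[of t m] t' m(1) adj_sym[of E m t] by blast
qed

end

locale heavy_edge_two_private = heavy_edge +
  assumes card_private_nbrs_eq_2: "card (private_nbrs x y) = 2"
begin

lemma twin_common_nbr:
  assumes u: "u \<in> nbhd x \<inter> nbhd y"
  shows "twin u = u"
proof -
  have "card (nbhd x \<inter> nbhd y) = k - 2"
    using card_private_nbrs_add_common[OF card_nbhd_x y_mem_nbhd_x] card_private_nbrs_eq_2 by simp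
  moreover have image: "c ` {..<k - 2} \<subseteq> nbhd x \<inter> nbhd y" using common_nbr_colour by auto
  moreover have "inj_on c {..<k - 2}"
  proof (rule inj_onI)
    fix i j assume "i \<in> {..<k - 2}" "j \<in> {..<k - 2}" "c i = c j"
    then show "i = j" using common_nbr_colour by (metis lessThan_iff)
  qed
  ultimately have "c ` {..<k - 2} = nbhd x \<inter> nbhd y"
    by (intro card_seteq) (simp_all add: finite_nbhd card_image)
  then have "u \<in> c ` {..<k - 2}" using u by simp
  then obtain i where "i < k - 2" "u = c i" by blast
  then have "f u = i" using common_nbr_colour by blast
  then show ?thesis using \<open>u = c i\<close> by (simp add: twin_def)
qed

lemma common_nonedge_meets_private_colours:
  assumes u: "u \<in> nbhd x \<inter> nbhd y" and v: "v \<in> nbhd x \<inter> nbhd y"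
    and "u \<noteq> v" and "\<not> adj E u v"
  shows "f u \<in> f ` private_nbrs x y \<or> f v \<in> f ` private_nbrs x y"
proof (rule ccontr)
  assume none: "\<not> ?thesis"
  have uv: "u \<in> V - {x, y}" "v \<in> V - {x, y}" using common_nbr_mem_V u v by blast+
  have cu: "c (f u) = u" and cv: "c (f v) = v"
    using twin_common_nbr[OF u] twin_common_nbr[OF v] by (simp_all add: twin_def)
  have "f u \<noteq> f v"
  proof
    assume "f u = f v"
    then have "c (f u) = c (f v)" by simp
    then show False using cu cv \<open>u \<noteq> v\<close> by simp
  qed
  let ?S = "{t \<in> V - {x, y}. f t = f u \<and> adj E x t \<or> f t = f v \<and> adj E y t}"
  have only_uv: "t \<in> {u, v}" if t: "t \<in> ?S" for t
  proof (cases "adj E x t \<and> adj E y t")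
    case True
    then have "c (f t) = t" using twin_common_nbr[of t] by (simp add: mem_nbhd_iff twin_def)
    moreover have "f t = f u \<or> f t = f v" using t by blast
    ultimately show ?thesis using cu cv by (metis insert_iff)
  next
    case False
    then have "t \<in> private_nbrs x y \<and> f t = f u \<or> t \<in> private_nbrs y x \<and> f t = f v"
      using t by (auto simp: mem_private_nbrs_iff)
    then have "f u \<in> f ` private_nbrs x y \<or> f v \<in> f ` private_nbrs y x"
      by (metis image_eqI)
    then have "f u \<in> f ` private_nbrs x y \<or> f v \<in> f ` private_nbrs x y"
      using private_nbrs_colours_eq by simp
    then show ?thesis using none by blast
  qed
  have "\<exists>u' \<in> ?S. \<exists>v' \<in> ?S. adj E u' v'"
    by (rule two_colour_nbrs_not_independent[OF edge colouring colour_less[OF uv(1)]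
          colour_less[OF uv(2)] \<open>f u \<noteq> f v\<close>])
  then obtain u' v' where "u' \<in> ?S" "v' \<in> ?S" and uv': "adj E u' v'" by blast
  then have "u' \<in> {u, v}" "v' \<in> {u, v}" by (simp_all only: only_uv)
  then show False using uv' \<open>\<not> adj E u v\<close> adj_sym[of E v u] not_adj_self by blast
qed

lemma common_nonedge_hub:
  assumes "P \<in> nbhd x \<inter> nbhd y" "Q \<in> nbhd x \<inter> nbhd y" "P \<noteq> Q" "\<not> adj E P Q"
  obtains a h m where "a \<in> private_nbrs x y" "h = twin a" "private_nbrs x h = {a, m}" "{h, m} = {P, Q}"
proof -
  have hub: "H = twin a \<and> private_nbrs x H = {a, M}"
    if H: "H \<in> nbhd x \<inter> nbhd y" and M: "M \<in> nbhd x \<inter> nbhd y" "H \<noteq> M" "\<not> adj E H M"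
      and a: "a \<in> private_nbrs x y" "f H = f a" for H M a
  proof -
    have "H = twin a" using twin_common_nbr[OF H] a(2) by (simp add: twin_def)
    obtain w where w: "private_nbrs x (twin a) = {a, w}"
      using private_nbrs_of_twin[OF a(1)] by blast
    have "M \<in> private_nbrs x H" using M by (simp add: mem_private_nbrs_iff mem_nbhd_iff)
    moreover have "M \<noteq> a" using M(1) a(1) by (auto simp: mem_private_nbrs_iff mem_nbhd_iff)
    ultimately have "M = w" using w \<open>H = twin a\<close> by simp
    then show ?thesis using w \<open>H = twin a\<close> by simp
  qed
  from common_nonedge_meets_private_colours[OF assms] show thesis
  proof
    assume "f P \<in> f ` private_nbrs x y"
    then obtain a where "a \<in> private_nbrs x y" "f P = f a" by blast
    then show thesis using hub[OF assms] that[of a P Q] by blast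
  next
    assume "f Q \<in> f ` private_nbrs x y"
    then obtain a where a: "a \<in> private_nbrs x y" "f Q = f a" by blast
    moreover have "\<not> adj E Q P" using assms(4) adj_sym[of E P Q] by blast
    ultimately have "Q = twin a" "private_nbrs x Q = {a, P}"
      using hub[OF assms(2,1) assms(3)[symmetric]] by blast+
    then show thesis using that[of a Q P] a(1) by (simp add: insert_commute)
  qed
qed

lemma disjoint_twin_nonedges:
  obtains a1 a2 m1 m2 where "private_nbrs x y = {a1, a2}"
    "private_nbrs x (twin a1) = {a1, m1}" "private_nbrs x (twin a2) = {a2, m2}"
    "distinct [twin a1, m1, twin a2, m2]" "m1 \<in> nbhd x \<inter> nbhd y"
proof -
  obtain a1 a2 where "private_nbrs x y = {a1, a2}" "a1 \<noteq> a2"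
    using card_private_nbrs_eq_2 unfolding card_2_iff by blast
  then have a12: "a1 \<in> private_nbrs x y" "a2 \<in> private_nbrs x y" "a1 \<noteq> a2" by simp_all
  then have "a1 \<in> nbhd x" "a2 \<in> nbhd x" "adj E a1 a2"
    using private_nbrs_adj[OF card_nbhd_x y_mem_nbhd_x a12] by (simp_all add: private_nbrs_def)
  then obtain p q r s where pqrs: "{p, q, r, s} \<subseteq> nbhd x - {a1, a2}" "distinct [p, q, r, s]"
    and "\<not> adj E p q" "\<not> adj E r s"
    using two_disjoint_nonedges_in_nbhd[OF card_nbhd_x] by blast
  moreover have "\<not> adj E q p" "\<not> adj E s r"
    using \<open>\<not> adj E p q\<close> \<open>\<not> adj E r s\<close> adj_sym[of E p q] adj_sym[of E r s] by blast+
  moreover have "v \<in> nbhd x" "v \<notin> private_nbrs x y" if "v \<in> {p, q, r, s}" for v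
    using that pqrs(1) \<open>private_nbrs x y = {a1, a2}\<close> by auto
  moreover have "p \<noteq> q" "r \<noteq> s" using pqrs(2) by auto
  ultimately have common: "p \<in> nbhd x \<inter> nbhd y" "q \<in> nbhd x \<inter> nbhd y"
    "r \<in> nbhd x \<inter> nbhd y" "s \<in> nbhd x \<inter> nbhd y"
    using nonedge_in_nbhd_common by (metis insertCI)+
  obtain a h m where a: "a \<in> private_nbrs x y" "h = twin a" "private_nbrs x h = {a, m}" "{h, m} = {p, q}"
    by (rule common_nonedge_hub[OF common(1,2) \<open>p \<noteq> q\<close> \<open>\<not> adj E p q\<close>])
  obtain a' h' m' where a': "a' \<in> private_nbrs x y" "h' = twin a'" "private_nbrs x h' = {a', m'}"
    "{h', m'} = {r, s}"
    by (rule common_nonedge_hub[OF common(3,4) \<open>r \<noteq> s\<close> \<open>\<not> adj E r s\<close>])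
  have "distinct [h, m, h', m']" using a(4) a'(4) pqrs(2) by (auto simp: doubleton_eq_iff)
  then have "a \<noteq> a'" using a(2) a'(2) by auto
  then have "private_nbrs x y = {a, a'}"
    using private_nbrs_eq_pair[OF card_nbhd_x y_mem_nbhd_x a(1) a'(1)] by blast
  moreover have "m \<in> nbhd x \<inter> nbhd y" using a(4) common by (auto simp: doubleton_eq_iff)
  ultimately show thesis using that[of a a' m m'] a a' \<open>distinct [h, m, h', m']\<close> by blast
qed

text \<open>The second private neighbour \<open>t\<close> of \<open>m1\<close> yields a common non-edge \<open>m1 t\<close>, which by
  \<open>common_nonedge_hub\<close> would have to be one of the two non-edges at \<open>twin a1\<close> and \<open>twin a2\<close>.\<close>

lemma inconsistent: False
proof -
  obtain a1 a2 m1 m2 where A: "private_nbrs x y = {a1, a2}"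
    and h1: "private_nbrs x (twin a1) = {a1, m1}" and h2: "private_nbrs x (twin a2) = {a2, m2}"
    and dist: "distinct [twin a1, m1, twin a2, m2]" and m1: "m1 \<in> nbhd x \<inter> nbhd y"
    by (rule disjoint_twin_nonedges)
  have "twin a1 \<in> nbhd x" using twin_mem[OF private_nbr_mem_V, of a1] A by simp
  then have "twin a1 \<in> private_nbrs x m1"
    using h1 private_nbrs_sym[of "twin a1" x m1] m1 by blast
  then obtain t where t: "private_nbrs x m1 = {twin a1, t}" "t \<noteq> twin a1"
    using private_nbrs_obtain_pair[OF card_nbhd_x] m1 by blast
  then have "t \<in> private_nbrs x m1" by simp
  then have t': "t \<in> nbhd x \<inter> nbhd y" "t \<noteq> m1" "\<not> adj E m1 t"
    using private_nbr_of_common_nbr[OF m1] A dist by (auto simp: mem_private_nbrs_iff)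
  obtain a h m where a: "a \<in> private_nbrs x y" "h = twin a" "private_nbrs x h = {a, m}"
    "{h, m} = {m1, t}"
    by (rule common_nonedge_hub[OF m1 t'(1) t'(2)[symmetric] t'(3)])
  have "h \<noteq> m1" using a(1,2) A dist by auto
  then have "h = t" "m = m1" using a(4) by (auto simp: doubleton_eq_iff)
  have "a \<noteq> a1" using a(2) \<open>h = t\<close> t(2) by blast
  then have "private_nbrs x (twin a2) = {a2, m1}" using a A \<open>m = m1\<close> by auto
  moreover have "m1 \<noteq> a2" using m1 A by (auto simp: mem_private_nbrs_iff mem_nbhd_iff)
  ultimately show False using h2 dist by (auto simp: doubleton_eq_iff)
qed

end

locale heavy_edge_no_private = heavy_edge +
  assumes no_private_nbrs: "private_nbrs x y = {}"
begin

definition colour_class :: "nat \<Rightarrow> 'a set" where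
  "colour_class i = {v \<in> nbhd x \<inter> nbhd y. f v = i}"

definition doubled :: "'a set" where
  "doubled = {v \<in> nbhd x \<inter> nbhd y. card (colour_class (f v)) = 2}"

lemma common_nbrs_eq_nbhd_x: "nbhd x \<inter> nbhd y = nbhd x - {y}"
  using no_private_nbrs not_adj_self by (auto simp: private_nbrs_def mem_nbhd_iff)

lemma common_nbrs_eq_nbhd_y: "nbhd x \<inter> nbhd y = nbhd y - {x}"
proof -
  interpret yx: heavy_edge V E k y x f c by (rule heavy_edge_commute)
  have "card (private_nbrs y x) = 0" using card_private_nbrs_commute no_private_nbrs by simp
  then have "private_nbrs y x = {}" using finite_private_nbrs by simp
  then show ?thesis using not_adj_self by (auto simp: private_nbrs_def mem_nbhd_iff)
qed

lemma card_colour_class_le_2: "card (colour_class i) \<le> 2"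
proof -
  have "colour_class i = {t \<in> nbhd x - {x, y}. f t = i}"
    using common_nbrs_eq_nbhd_x not_adj_self by (auto simp: colour_class_def mem_nbhd_iff)
  then show ?thesis using card_colour_class_in_nbhd_le_2[OF card_nbhd_x colouring] by simp
qed

lemma common_nbr_in_colour_class: "i < k - 2 \<Longrightarrow> c i \<in> colour_class i"
  using common_nbr_colour by (simp add: colour_class_def)

text \<open>The \<open>k\<close> common neighbours carry all \<open>k - 2\<close> colours, each at most twice.\<close>

lemma card_doubled_colours: "card (f ` doubled) = 2"
proof -
  define T where "T = nbhd x \<inter> nbhd y"
  have finT: "finite T" using finite_nbhd by (simp add: T_def)
  have "f ` T = {..<k - 2}"
    using colour_less common_nbr_mem_V common_nbr_in_colour_class
    by (force simp: T_def colour_class_def)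
  moreover have "card T = k"
    using card_nbhd_x y_mem_nbhd_x finite_nbhd by (simp add: T_def common_nbrs_eq_nbhd_x)
  moreover have "card T = card (f ` T) + card {i \<in> f ` T. card {t \<in> T. f t = i} = 2}"
    by (rule card_eq_card_image_add_double_fibres[OF finT])
      (use card_colour_class_le_2 in \<open>simp add: T_def colour_class_def\<close>)
  moreover have "f ` doubled = {i \<in> f ` T. card {t \<in> T. f t = i} = 2}"
    by (auto simp: doubled_def T_def colour_class_def)
  ultimately show ?thesis using two_le_k[OF edge] by simp
qed

lemma colour_class_singleton:
  assumes w: "w \<in> nbhd x \<inter> nbhd y" "w \<notin> doubled"
  shows "colour_class (f w) = {w}"
proof -
  have "w \<in> colour_class (f w)" using w(1) by (simp add: colour_class_def)
  moreover have "finite (colour_class (f w))" using finite_nbhd by (simp add: colour_class_def)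
  ultimately have "card (colour_class (f w)) \<noteq> 0" by auto
  then have "card (colour_class (f w)) = 1"
    using w card_colour_class_le_2[of "f w"] by (auto simp: doubled_def)
  then obtain w' where "colour_class (f w) = {w'}" by (rule card_1_singletonE)
  then show ?thesis using \<open>w \<in> colour_class (f w)\<close> by simp
qed

lemma common_nonedge_meets_doubled:
  assumes u: "u \<in> nbhd x \<inter> nbhd y" and v: "v \<in> nbhd x \<inter> nbhd y"
    and "u \<noteq> v" and "\<not> adj E u v"
  shows "u \<in> doubled \<or> v \<in> doubled"
proof (rule ccontr)
  assume "\<not> ?thesis"
  then have cu: "colour_class (f u) = {u}" and cv: "colour_class (f v) = {v}"
    using colour_class_singleton u v by blast+
  have uv: "u \<in> V - {x, y}" "v \<in> V - {x, y}" using common_nbr_mem_V u v by blast+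
  have "f u \<noteq> f v"
  proof
    assume "f u = f v"
    then have "v \<in> colour_class (f u)" using v by (simp add: colour_class_def)
    then show False using cu \<open>u \<noteq> v\<close> by simp
  qed
  let ?S = "{t \<in> V - {x, y}. f t = f u \<and> adj E x t \<or> f t = f v \<and> adj E y t}"
  have only_uv: "t \<in> {u, v}" if t: "t \<in> ?S" for t
  proof -
    have "t \<in> nbhd x - {y} \<and> f t = f u \<or> t \<in> nbhd y - {x} \<and> f t = f v"
      using t by (auto simp: mem_nbhd_iff)
    then have "t \<in> colour_class (f u) \<or> t \<in> colour_class (f v)"
      unfolding colour_class_def common_nbrs_eq_nbhd_x[symmetric] common_nbrs_eq_nbhd_y[symmetric] by blast
    then show ?thesis using cu cv by blast
  qed
  have "\<exists>u' \<in> ?S. \<exists>v' \<in> ?S. adj E u' v'"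
    by (rule two_colour_nbrs_not_independent[OF edge colouring colour_less[OF uv(1)]
          colour_less[OF uv(2)] \<open>f u \<noteq> f v\<close>])
  then obtain u' v' where "u' \<in> ?S" "v' \<in> ?S" and uv': "adj E u' v'" by blast
  then have "u' \<in> {u, v}" "v' \<in> {u, v}" by (simp_all only: only_uv)
  then show False using uv' \<open>\<not> adj E u v\<close> adj_sym[of E v u] not_adj_self by blast
qed

lemma private_nbrs_outside_doubled:
  assumes w: "w \<in> nbhd x \<inter> nbhd y" "w \<notin> doubled"
  shows "private_nbrs x w \<subseteq> doubled"
proof
  fix t assume "t \<in> private_nbrs x w"
  then have t: "t \<in> nbhd x" "t \<noteq> w" "\<not> adj E w t" by (auto simp: private_nbrs_def)
  have "t \<noteq> y" using t(3) w(1) adj_sym[of E w y] by (auto simp: mem_nbhd_iff)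
  then have "t \<in> nbhd x \<inter> nbhd y" using t(1) common_nbrs_eq_nbhd_x by blast
  then show "t \<in> doubled" using common_nonedge_meets_doubled[OF w(1) _ t(2)[symmetric] t(3)] w(2) by blast
qed

lemma colour_class_private_nbr:
  assumes "p \<in> colour_class i" "p' \<in> colour_class i" "p \<noteq> p'"
  shows "p \<in> private_nbrs x p'"
proof -
  have "p \<in> nbhd x \<inter> nbhd y" "p' \<in> nbhd x \<inter> nbhd y" "f p = f p'"
    using assms(1,2) by (simp_all add: colour_class_def)
  then show ?thesis
    using assms(3) colour_adj[OF common_nbr_mem_V common_nbr_mem_V, of p' p] adj_sym[of E p' p]
    by (auto simp: mem_private_nbrs_iff mem_nbhd_iff)
qed

lemma doubled_classes:
  obtains p1 p1' p2 p2' where "doubled = {p1, p1', p2, p2'}" "distinct [p1, p1', p2, p2']"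
    "p1 \<in> private_nbrs x p1'" "p2 \<in> private_nbrs x p2'"
proof -
  obtain i1 i2 where I: "f ` doubled = {i1, i2}" "i1 \<noteq> i2"
    using card_doubled_colours unfolding card_2_iff by blast
  have "card (colour_class i) = 2" if "i \<in> f ` doubled" for i
    using that by (auto simp: doubled_def)
  then obtain p1 p1' p2 p2' where P: "colour_class i1 = {p1, p1'}" "p1 \<noteq> p1'"
    "colour_class i2 = {p2, p2'}" "p2 \<noteq> p2'"
    using I(1) unfolding card_2_iff by (metis insertCI)
  have "v \<in> doubled \<longleftrightarrow> v \<in> colour_class i1 \<union> colour_class i2" for v
  proof
    assume v: "v \<in> doubled"
    then have "f v \<in> {i1, i2}" using I(1) by blast
    moreover have "v \<in> colour_class (f v)" using v by (simp add: doubled_def colour_class_def)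
    ultimately show "v \<in> colour_class i1 \<union> colour_class i2" by auto
  next
    assume v: "v \<in> colour_class i1 \<union> colour_class i2"
    then have "colour_class (f v) = colour_class i1 \<or> colour_class (f v) = colour_class i2"
      by (auto simp: colour_class_def)
    then have "card (colour_class (f v)) = 2" using P by auto
    then show "v \<in> doubled" using v by (auto simp: doubled_def colour_class_def)
  qed
  then have "doubled = {p1, p1', p2, p2'}" using P by auto
  moreover have "distinct [p1, p1', p2, p2']"
  proof -
    have "f p1 = i1" "f p1' = i1" "f p2 = i2" "f p2' = i2"
      using P(1,3) unfolding colour_class_def by blast+
    then show ?thesis using P(2,4) I(2) by auto
  qed
  moreover have "p1 \<in> private_nbrs x p1'" "p2 \<in> private_nbrs x p2'"
    using colour_class_private_nbr[of p1 i1 p1'] colour_class_private_nbr[of p2 i2 p2'] P by simp_all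
  ultimately show thesis using that by blast
qed

lemma nonedge_in_nbhd_meets_second_class:
  assumes D: "doubled = {p1, p1', p2, p2'}"
    and b: "private_nbrs x p1' = {p1, b}" and e: "private_nbrs x p2 = {p2', e}"
    and e': "private_nbrs x p2' = {p2, e'}"
    and PQ: "P \<in> nbhd x - {p1, b}" "Q \<in> nbhd x - {p1, b}" "P \<noteq> Q" "\<not> adj E P Q"
  shows "p1' \<notin> {P, Q} \<and> ({P, Q} = {p2, p2'} \<or> {P, Q} = {p2, e} \<or> {P, Q} = {p2', e'})"
proof -
  have "\<not> adj E Q P" using PQ(4) adj_sym[of E P Q] by blast
  then have common: "P \<in> nbhd x \<inter> nbhd y" "Q \<in> nbhd x \<inter> nbhd y"
    using nonedge_in_nbhd_common PQ no_private_nbrs by blast+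
  have "Q \<in> private_nbrs x P" "P \<in> private_nbrs x Q"
    using PQ \<open>\<not> adj E Q P\<close> by (auto simp: mem_private_nbrs_iff mem_nbhd_iff)
  then have "P \<noteq> p1'" "Q \<noteq> p1'" using b PQ(1,2) by auto
  moreover have "P \<in> {p2, p2'} \<or> Q \<in> {p2, p2'}"
    using common_nonedge_meets_doubled[OF common PQ(3,4)] D PQ(1,2) \<open>P \<noteq> p1'\<close> \<open>Q \<noteq> p1'\<close> by auto
  ultimately show ?thesis
    using \<open>Q \<in> private_nbrs x P\<close> \<open>P \<in> private_nbrs x Q\<close> e e' by auto
qed

lemma private_nbr_of_first_class:
  assumes D: "doubled = {p1, p1', p2, p2'}" and b: "private_nbrs x p1' = {p1, b}"
    and w: "w \<in> nbhd x" "w \<notin> doubled" "w \<noteq> b"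
    and Z: "{Z, Z'} = {p2, p2'}" "w \<in> private_nbrs x Z" "w \<notin> private_nbrs x Z'"
  shows "w \<in> private_nbrs x p1"
proof -
  have "Z \<in> doubled" using D Z(1) by (auto simp: doubleton_eq_iff)
  then have Zc: "Z \<in> nbhd x \<inter> nbhd y" by (simp add: doubled_def)
  then have "w \<noteq> y" using Z(2) adj_sym[of E y Z] by (auto simp: mem_private_nbrs_iff mem_nbhd_iff)
  then have wc: "w \<in> nbhd x \<inter> nbhd y" using w(1) common_nbrs_eq_nbhd_x by blast
  have "Z \<in> private_nbrs x w" using Z(2) private_nbrs_sym[of Z x w] Zc w(1) by blast
  then obtain t where t: "private_nbrs x w = {Z, t}" "t \<noteq> Z"
    using private_nbrs_obtain_pair[OF card_nbhd_x w(1)] by blast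
  then have "t \<in> doubled" using private_nbrs_outside_doubled[OF wc w(2)] by blast
  then have "w \<in> private_nbrs x t"
    using t(1) private_nbrs_sym[of t x w] w(1) by (auto simp: doubled_def)
  then have "t \<noteq> Z'" "t \<noteq> p1'" using Z(3) b w(2,3) D by auto
  then have "t = p1" using \<open>t \<in> doubled\<close> t(2) D Z(1) by (auto simp: doubleton_eq_iff)
  then show ?thesis using \<open>w \<in> private_nbrs x t\<close> by simp
qed

lemma nonedges_beside_first_class:
  assumes D: "doubled = {p1, p1', p2, p2'}"
    and b: "private_nbrs x p1' = {p1, b}" "b \<noteq> p1" and e: "private_nbrs x p2 = {p2', e}"
    and e': "private_nbrs x p2' = {p2, e'}"
  shows "e \<noteq> e' \<and> {e, e'} \<subseteq> nbhd x - {p1, p1', b}"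
proof -
  have "p1 \<in> nbhd x" "p1' \<in> nbhd x" using D by (auto simp: doubled_def)
  moreover have "p1 \<in> private_nbrs x p1'" "b \<in> private_nbrs x p1'" using b(1) by simp_all
  ultimately have "adj E p1 b" "b \<in> nbhd x"
    using private_nbrs_adj[OF card_nbhd_x, of p1' p1 b] b(2) by (auto simp: private_nbrs_def)
  then obtain p q r s where pqrs: "{p, q, r, s} \<subseteq> nbhd x - {p1, b}" "distinct [p, q, r, s]"
    and "\<not> adj E p q" "\<not> adj E r s"
    using two_disjoint_nonedges_in_nbhd[OF card_nbhd_x \<open>p1 \<in> nbhd x\<close>] by blast
  have mem: "p \<in> nbhd x - {p1, b}" "q \<in> nbhd x - {p1, b}" "r \<in> nbhd x - {p1, b}"
    "s \<in> nbhd x - {p1, b}" and "p \<noteq> q" "r \<noteq> s"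
    using pqrs by auto
  have pq: "p1' \<notin> {p, q} \<and> ({p, q} = {p2, p2'} \<or> {p, q} = {p2, e} \<or> {p, q} = {p2', e'})"
    by (rule nonedge_in_nbhd_meets_second_class[OF D b(1) e e' mem(1,2) \<open>p \<noteq> q\<close>]) fact
  have rs: "p1' \<notin> {r, s} \<and> ({r, s} = {p2, p2'} \<or> {r, s} = {p2, e} \<or> {r, s} = {p2', e'})"
    by (rule nonedge_in_nbhd_meets_second_class[OF D b(1) e e' mem(3,4) \<open>r \<noteq> s\<close>]) fact
  have "e \<noteq> e'" "{e, e'} \<subseteq> {p, q, r, s}"
    using disjoint_pairs_through_pair[OF pqrs(2) pq[THEN conjunct2] rs[THEN conjunct2]] by simp_all
  then show ?thesis using pqrs(1) pq rs by auto
qed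

text \<open>Both \<open>e\<close> and \<open>e'\<close> turn out to be the second private neighbour \<open>g\<close> of \<open>p1\<close>.\<close>

lemma inconsistent: False
proof -
  obtain p1 p1' p2 p2' where D: "doubled = {p1, p1', p2, p2'}" "distinct [p1, p1', p2, p2']"
    and p1: "p1 \<in> private_nbrs x p1'" and p2: "p2 \<in> private_nbrs x p2'"
    by (rule doubled_classes)
  have inN: "p1 \<in> nbhd x" "p1' \<in> nbhd x" "p2 \<in> nbhd x" "p2' \<in> nbhd x"
    using D(1) by (auto simp: doubled_def)
  obtain b where b: "private_nbrs x p1' = {p1, b}" "b \<noteq> p1"
    by (rule private_nbrs_obtain_pair[OF card_nbhd_x inN(2) p1])
  have "p1' \<in> private_nbrs x p1" "p2' \<in> private_nbrs x p2"
    using p1 p2 private_nbrs_sym inN by blast+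
  then obtain g e e' where g: "private_nbrs x p1 = {p1', g}"
    and e: "private_nbrs x p2 = {p2', e}" "e \<noteq> p2'" and e': "private_nbrs x p2' = {p2, e'}" "e' \<noteq> p2"
    using private_nbrs_obtain_pair[OF card_nbhd_x] inN p2 by metis
  have ee: "e \<noteq> e'" "{e, e'} \<subseteq> nbhd x - {p1, p1', b}"
    using nonedges_beside_first_class[OF D(1) b e(1) e'(1)] by simp_all
  have "e \<in> private_nbrs x p2" "e' \<in> private_nbrs x p2'" using e(1) e'(1) by simp_all
  then have "e \<noteq> p2" "e' \<noteq> p2'" by (simp_all add: mem_private_nbrs_iff)
  then have out: "e \<notin> doubled" "e' \<notin> doubled" using ee(2) e(2) e'(2) by (auto simp: D(1))
  have "e \<notin> private_nbrs x p2'" "e' \<notin> private_nbrs x p2"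
    using e'(1) e(1) ee(1) \<open>e \<noteq> p2\<close> \<open>e' \<noteq> p2'\<close> by simp_all
  then have "e \<in> private_nbrs x p1" "e' \<in> private_nbrs x p1"
    using private_nbr_of_first_class[OF D(1) b(1) _ out(1) _ refl \<open>e \<in> private_nbrs x p2\<close>]
      private_nbr_of_first_class[OF D(1) b(1) _ out(2) _ insert_commute \<open>e' \<in> private_nbrs x p2'\<close>]
      ee(2) by auto
  then show False using g ee by auto
qed

end

lemma (in double_critical_graph) adjacent_vertices_not_both_degree_Suc_k:
  assumes xy: "adj E x y" and dx: "card (nbhd x) = Suc k" and dy: "card (nbhd y) = Suc k"
  shows False
proof -
  obtain f where f: "residual_colouring x y f" using residual_colouring_exists[OF xy] .
  obtain c where c: "\<forall>i < k - 2. c i \<in> nbhd x \<inter> nbhd y \<and> f (c i) = i"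
    using common_nbr_choice[OF xy f] .
  interpret heavy_edge V E k x y f c
    using xy dx dy f c by unfold_locales
  consider "card (private_nbrs x y) = 2" | "private_nbrs x y = {}"
    using card_private_nbrs_0_or_2 finite_private_nbrs by auto
  then show False
  proof cases
    case 1
    then interpret heavy_edge_two_private V E k x y f c by unfold_locales
    show False by (rule inconsistent)
  next
    case 2
    then interpret heavy_edge_no_private V E k x y f c by unfold_locales
    show False by (rule inconsistent)
  qed
qed

theorem theorem15:
  fixes V :: "'a set" and E :: "'a set set" and k :: nat
  assumes "graph V E"
    and "double_critical V E"
    and "chromatic_number V E = k"
    and "\<not> complete_graph V E"
  shows "\<not> (\<exists>x\<in>V. \<exists>y\<in>V. adj E x y \<and> degree V E x = k + 1 \<and> degree V E y = k + 1)"
proof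
  interpret double_critical_graph V E k
    using assms(1-3) by unfold_locales
  assume "\<exists>x\<in>V. \<exists>y\<in>V. adj E x y \<and> degree V E x = k + 1 \<and> degree V E y = k + 1"
  then obtain x y where "adj E x y" "card (nbhd x) = Suc k" "card (nbhd y) = Suc k"
    by (auto simp: degree_def nbhd_def)
  then show False by (rule adjacent_vertices_not_both_degree_Suc_k)
qed

end
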